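(* Let $\Gamma^B$ be either $\Gamma_1^B$ or $\Gamma_2^B$ (as in the context), with the operator $-\Delta=-d^2/dx^2$. Then the first eigenvalue $\lambda_1$ of $-\Delta$ on $\Gamma^B$ is simple. Moreover, if $\ell_1=\ell_2=\ell_3=\ell_4$, then the eigenfunction $\phi$ corresponding to $\lambda_1$ is identical on the four edges $e_1,\dots,e_4$, i.e. $\phi_1\equiv\phi_2\equiv\phi_3\equiv\phi_4$ where $\phi_j=\phi|_{e_j}$ (each edge parametrized from $B$ to $A$), and it is non-zero everywhere except at $B$.
   Context: $\Gamma_1$: two vertices $A,B$ joined by four edges $e_1,\dots,e_4$ of lengths $\ell_1,\dots,\ell_4>0$, with $\delta$-type condition (real coupling constant $\gamma_A$) at $A$. $\Gamma_2$: $\Gamma_1$ plus a vertex $C$ and edge $e_0$ of length $\ell_0>0$ joining $C$ to $A$, with Neumann–Kirchhoff conditions at $A$ and $C$. A $\delta$-type condition with coupling $\gamma_v$ at $v$: $f$ continuous at $v$ and $\sum_{e\ni v}f_e'(v)=\gamma_vf(v)$ (derivatives into the edges); Neumann–Kirchhoff means $\gamma_v=0$. $\Gamma_i^B$ is obtained from $\Gamma_i$ by imposing the Dirichlet condition $f_e(B)=0$ on every edge end at $B$ (which decouples the edge ends at $B$). *)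

theory Defs
  imports "HOL-Analysis.Analysis"
begin

definition edge_eig :: "real \<Rightarrow> real \<Rightarrow> (real \<Rightarrow> real) \<Rightarrow> (real \<Rightarrow> real) \<Rightarrow> bool" where
  "edge_eig l lam f f' \<longleftrightarrow>
     (\<exists>f''. \<forall>x\<in>{0..l}.
        (f has_real_derivative f' x) (at x within {0..l}) \<and>
        (f' has_real_derivative f'' x) (at x within {0..l}) \<and>
        - f'' x = lam * f x)"

definition edges :: "nat \<Rightarrow> nat set" where
  "edges i = (if i = 1 then {1..4} else {0..4})"

(* Coupling constant at A: gamma_A for Gamma_1, 0 (Neumann-Kirchhoff) for Gamma_2. *)
definition coupling :: "nat \<Rightarrow> real \<Rightarrow> real" where
  "coupling i gA = (if i = 1 then gA else 0)"

(* Edges e_1..e_4 are parametrised from B (x = 0) to A (x = l j);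
   edge e_0 (only for i = 2) is parametrised from A (x = 0) to C (x = l 0).
   phi j is the restriction to e_j, phi' j its derivative. *)
definition is_eigfun_B :: "nat \<Rightarrow> (nat \<Rightarrow> real) \<Rightarrow> real \<Rightarrow> real \<Rightarrow> (nat \<Rightarrow> real \<Rightarrow> real) \<Rightarrow> bool" where
  "is_eigfun_B i l gA lam phi \<longleftrightarrow>
     (\<exists>phi'.
        (\<forall>j\<in>edges i. edge_eig (l j) lam (phi j) (phi' j)) \<and>
        \<comment> \<open>Dirichlet condition at B on every edge end at B\<close>
        (\<forall>j\<in>{1..4}. phi j 0 = 0) \<and>
        \<comment> \<open>continuity at A\<close>
        (\<forall>j\<in>{1..4}. phi j (l j) = phi 1 (l 1)) \<and>
        (i = 2 \<longrightarrow> phi 0 0 = phi 1 (l 1)) \<and>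
        \<comment> \<open>delta / Kirchhoff condition at A (derivatives taken into the edges)\<close>
        ((if i = 2 then phi' 0 0 else 0) + (\<Sum>j\<in>{1..4}. - phi' j (l j))
           = coupling i gA * phi 1 (l 1)) \<and>
        \<comment> \<open>Neumann-Kirchhoff at C (only edge e_0 there)\<close>
        (i = 2 \<longrightarrow> phi' 0 (l 0) = 0) \<and>
        \<comment> \<open>non-trivial\<close>
        (\<exists>j\<in>edges i. \<exists>x\<in>{0..l j}. phi j x \<noteq> 0))"

definition is_eigval_B :: "nat \<Rightarrow> (nat \<Rightarrow> real) \<Rightarrow> real \<Rightarrow> real \<Rightarrow> bool" where
  "is_eigval_B i l gA lam \<longleftrightarrow> (\<exists>phi. is_eigfun_B i l gA lam phi)"

end

theory Submission
  imports Defs "HOL-Real_Asymp.Real_Asymp"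
begin

(* Let k be the least of pi / l_j (j = 1, ..., 4) and, for Gamma_2, pi / (2 l_0); so k^2 is the
   smallest of the first Dirichlet eigenvalues of the edges e_j and the first Dirichlet-Neumann
   eigenvalue of e_0.  For m < k^2 the solution of -u'' = m u satisfying the outer boundary
   condition of an edge vanishes only at B.  Hence an eigenfunction with such an eigenvalue is,
   on every edge, this solution scaled by its value at A, which cannot vanish; so it is unique up
   to a factor, vanishes only at B and agrees on edges of equal length.  The vertex condition at A
   becomes a secular equation in m, which has a root m < k^2 by the intermediate value theorem:
   the secular function tends to +infinity as m -> -infinity and to -infinity as m -> k^2.
   No eigenvalue mu lies below this root: if also mu < k^2, the two eigenfunctions have a product
   of constant sign, so for mu \<noteq> m the increments of their Wronskian along the edges would all
   have the same strict sign, whereas the vertex conditions make them sum to zero. *)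

definition fund_sin :: "real \<Rightarrow> real \<Rightarrow> real" where
  "fund_sin m x =
     (if m > 0 then sin (sqrt m * x) else if m = 0 then x else sinh (sqrt (- m) * x))"

definition fund_sin' :: "real \<Rightarrow> real \<Rightarrow> real" where
  "fund_sin' m x =
     (if m > 0 then sqrt m * cos (sqrt m * x)
      else if m = 0 then 1 else sqrt (- m) * cosh (sqrt (- m) * x))"

definition fund_cos :: "real \<Rightarrow> real \<Rightarrow> real" where
  "fund_cos m x =
     (if m > 0 then cos (sqrt m * x) else if m = 0 then 1 else cosh (sqrt (- m) * x))"

definition fund_cos' :: "real \<Rightarrow> real \<Rightarrow> real" where
  "fund_cos' m x =
     (if m > 0 then - sqrt m * sin (sqrt m * x)
      else if m = 0 then 0 else sqrt (- m) * sinh (sqrt (- m) * x))"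

lemma fund_sin_0 [simp]: "fund_sin m 0 = 0"
  by (simp add: fund_sin_def)

lemma fund_cos'_0 [simp]: "fund_cos' m 0 = 0"
  by (simp add: fund_cos'_def)

lemma fund_sin_has_derivative: "(fund_sin m has_real_derivative fund_sin' m x) (at x within A)"
  unfolding fund_sin_def[abs_def] fund_sin'_def
  by (cases "m > 0"; cases "m = 0") (auto intro!: derivative_eq_intros simp: mult.assoc)

lemma fund_sin'_has_derivative:
  "(fund_sin' m has_real_derivative - m * fund_sin m x) (at x within A)"
  unfolding fund_sin'_def[abs_def] fund_sin_def
  by (cases "m > 0"; cases "m = 0") (auto intro!: derivative_eq_intros simp: mult.assoc)

lemma fund_cos_has_derivative: "(fund_cos m has_real_derivative fund_cos' m x) (at x within A)"
  unfolding fund_cos_def[abs_def] fund_cos'_def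
  by (cases "m > 0"; cases "m = 0") (auto intro!: derivative_eq_intros simp: mult.assoc)

lemma fund_cos'_has_derivative:
  "(fund_cos' m has_real_derivative - m * fund_cos m x) (at x within A)"
  unfolding fund_cos'_def[abs_def] fund_cos_def
  by (cases "m > 0"; cases "m = 0") (auto intro!: derivative_eq_intros simp: mult.assoc)

lemma fund_sin_pos:
  assumes "0 < x" "sqrt m * x < pi"
  shows "0 < fund_sin m x"
  using assms sin_gt_zero[of "sqrt m * x"] by (auto simp: fund_sin_def)

lemma fund_cos_pos:
  assumes "0 \<le> x" "sqrt m * x < pi / 2"
  shows "0 < fund_cos m x"
proof (cases "m > 0")
  case True
  then have "0 \<le> sqrt m * x" using assms(1) by simp
  then show ?thesis using True assms(2) by (simp add: fund_cos_def cos_gt_zero_pi)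
qed (simp add: fund_cos_def)

lemma edge_eig_has_derivative:
  assumes "edge_eig l m f f'" "x \<in> {0..l}"
  shows "(f has_real_derivative f' x) (at x within {0..l})"
  using assms unfolding edge_eig_def by blast

lemma edge_eig_scale:
  assumes "edge_eig l m f f'"
  shows "edge_eig l m (\<lambda>x. a * f x) (\<lambda>x. a * f' x)"
proof -
  obtain f'' where f'': "\<forall>x\<in>{0..l}. (f has_real_derivative f' x) (at x within {0..l}) \<and>
      (f' has_real_derivative f'' x) (at x within {0..l}) \<and> - f'' x = m * f x"
    using assms unfolding edge_eig_def by blast
  show ?thesis
    unfolding edge_eig_def
  proof (intro exI[of _ "\<lambda>x. a * f'' x"] ballI conjI)
    fix x assume "x \<in> {0..l}"
    with f'' show "((\<lambda>x. a * f x) has_real_derivative a * f' x) (at x within {0..l})"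
      "((\<lambda>x. a * f' x) has_real_derivative a * f'' x) (at x within {0..l})"
      by (auto intro: DERIV_cmult)
    from f'' \<open>x \<in> {0..l}\<close> have "- f'' x = m * f x" by blast
    then show "- (a * f'' x) = m * (a * f x)" by (metis mult.left_commute mult_minus_right)
  qed
qed

lemma edge_eig_fund_sin: "edge_eig l m (fund_sin m) (fund_sin' m)"
  unfolding edge_eig_def using fund_sin_has_derivative fund_sin'_has_derivative by fastforce

lemma edge_eig_fund_cos_reflected:
  "edge_eig l m (\<lambda>x. fund_cos m (l - x)) (\<lambda>x. - fund_cos' m (l - x))"
proof -
  have reflect: "((\<lambda>x. l - x) has_real_derivative - 1) (at x within A)" for x A
    by (auto intro!: derivative_eq_intros)
  have "((\<lambda>x. fund_cos m (l - x)) has_real_derivative - fund_cos' m (l - x)) (at x within A)"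
    "((\<lambda>x. - fund_cos' m (l - x)) has_real_derivative - m * fund_cos m (l - x)) (at x within A)"
    for x A
    using DERIV_chain2[OF fund_cos_has_derivative reflect]
      DERIV_minus[OF DERIV_chain2[OF fund_cos'_has_derivative reflect]] by simp_all
  then show ?thesis
    unfolding edge_eig_def by (intro exI[of _ "\<lambda>x. - m * fund_cos m (l - x)"]) auto
qed

definition wronskian ::
    "(real \<Rightarrow> real) \<Rightarrow> (real \<Rightarrow> real) \<Rightarrow> (real \<Rightarrow> real) \<Rightarrow> (real \<Rightarrow> real) \<Rightarrow> real \<Rightarrow> real" where
  "wronskian f f' g g' x = f' x * g x - f x * g' x"

lemma wronskian_has_derivative:
  assumes "edge_eig l mu f f'" "edge_eig l lam g g'" "x \<in> {0..l}"
  shows "(wronskian f f' g g' has_real_derivative (lam - mu) * (f x * g x)) (at x within {0..l})"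
proof -
  obtain f'' g'' where
    f: "(f has_real_derivative f' x) (at x within {0..l})"
       "(f' has_real_derivative f'' x) (at x within {0..l})" "- f'' x = mu * f x" and
    g: "(g has_real_derivative g' x) (at x within {0..l})"
       "(g' has_real_derivative g'' x) (at x within {0..l})" "- g'' x = lam * g x"
    using assms unfolding edge_eig_def by blast
  have f'': "f'' x = - mu * f x" and g'': "g'' x = - lam * g x"
    using f(3) g(3) by linarith+
  have "(wronskian f f' g g' has_real_derivative
          (f'' x * g x + g' x * f' x) - (f' x * g' x + g'' x * f x)) (at x within {0..l})"
    unfolding wronskian_def[abs_def] by (intro DERIV_diff DERIV_mult f(1,2) g(1,2))
  also have "(f'' x * g x + g' x * f' x) - (f' x * g' x + g'' x * f x) = (lam - mu) * (f x * g x)"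
    unfolding f'' g'' by (simp add: algebra_simps)
  finally show ?thesis .
qed

lemma wronskian_constant:
  assumes "edge_eig l m f f'" "edge_eig l m g g'" "x \<in> {0..l}" "y \<in> {0..l}"
  shows "wronskian f f' g g' x = wronskian f f' g g' y"
proof -
  obtain c where "\<forall>z\<in>{0..l}. wronskian f f' g g' z = c"
    using has_field_derivative_zero_constant[of "{0..l}" "wronskian f f' g g'"]
      wronskian_has_derivative[OF assms(1,2)] by fastforce
  then show ?thesis using assms(3,4) by simp
qed

lemma edge_eig_proportional:
  assumes f: "edge_eig l m f f'" and g: "edge_eig l m g g'"
    and "p \<in> {0..l}" "wronskian f f' g g' p = 0"
    and "0 \<le> a" "a \<le> b" "b \<le> l" "\<forall>y\<in>{a..b}. g y \<noteq> 0"
  shows "f a * g b = f b * g a"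
proof -
  have sub: "{a..b} \<subseteq> {0..l}" using assms(5,7) by auto
  have "((\<lambda>y. f y / g y) has_real_derivative 0) (at y within {a..b})" if y: "y \<in> {a..b}" for y
  proof -
    have "y \<in> {0..l}" using y sub by blast
    then have "(f has_real_derivative f' y) (at y within {a..b})"
         "(g has_real_derivative g' y) (at y within {a..b})"
      using has_field_derivative_subset[OF edge_eig_has_derivative[OF f] sub]
        has_field_derivative_subset[OF edge_eig_has_derivative[OF g] sub] by auto
    then have "((\<lambda>y. f y / g y) has_real_derivative
        (f' y * g y - f y * g' y) / (g y * g y)) (at y within {a..b})"
      using assms(8) y by (intro DERIV_divide) auto
    moreover have "f' y * g y - f y * g' y = 0"
      using wronskian_constant[OF f g, of y p] assms(3,4) y sub
      unfolding wronskian_def by auto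
    ultimately show ?thesis by simp
  qed
  then obtain c where "\<forall>y\<in>{a..b}. f y / g y = c"
    using has_field_derivative_zero_constant[of "{a..b}" "\<lambda>y. f y / g y"] by fastforce
  then show ?thesis using assms(6,8) by (auto simp: field_simps)
qed

lemma wronskian_increment_sign:
  assumes f: "edge_eig l mu f f'" and g: "edge_eig l lam g g'" and "0 < l" "lam \<noteq> mu"
    and pos: "\<forall>x\<in>{0<..<l}. 0 < c * (f x * g x)"
  shows "0 < c * (lam - mu) * (wronskian f f' g g' l - wronskian f f' g g' 0)"
proof -
  obtain x where x: "x \<in> {0<..<l}"
    and eq: "wronskian f f' g g' l - wronskian f f' g g' 0 = l * ((lam - mu) * (f x * g x))"
    using mvt_simple[OF \<open>0 < l\<close>, of "wronskian f f' g g'" "\<lambda>x. (*) ((lam - mu) * (f x * g x))"]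
      wronskian_has_derivative[OF f g]
    by (auto simp: has_field_derivative_def mult.commute)
  have "0 < (lam - mu)\<^sup>2" using assms(4) by simp
  then have "0 < l * (lam - mu)\<^sup>2 * (c * (f x * g x))"
    using assms(3) pos x by simp
  then show ?thesis unfolding eq by (simp add: algebra_simps power2_eq_square)
qed

lemma dirichlet_edge_eq:
  assumes f: "edge_eig l m f f'" and "f 0 = 0" and pos: "\<forall>y\<in>{0<..l}. 0 < fund_sin m y"
    and x: "x \<in> {0..l}"
  shows "f x * fund_sin m l = f l * fund_sin m x"
proof (cases "x = 0")
  case False
  have "wronskian f f' (fund_sin m) (fund_sin' m) 0 = 0"
    using \<open>f 0 = 0\<close> by (simp add: wronskian_def)
  moreover have "\<forall>y\<in>{x..l}. fund_sin m y \<noteq> 0"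
    using pos x False by (auto simp: less_imp_neq[symmetric])
  ultimately show ?thesis
    using edge_eig_proportional[OF f edge_eig_fund_sin, of 0 x l] x by auto
qed (simp add: \<open>f 0 = 0\<close>)

lemma neumann_edge_eq:
  assumes f: "edge_eig l m f f'" and "f' l = 0" and pos: "\<forall>y\<in>{0..l}. 0 < fund_cos m y"
    and x: "x \<in> {0..l}"
  shows "f x * fund_cos m l = f 0 * fund_cos m (l - x)"
proof -
  have "wronskian f f' (\<lambda>y. fund_cos m (l - y)) (\<lambda>y. - fund_cos' m (l - y)) l = 0"
    using \<open>f' l = 0\<close> by (simp add: wronskian_def)
  moreover have "\<forall>y\<in>{0..x}. fund_cos m (l - y) \<noteq> 0"
    using pos x by (simp add: less_imp_neq[symmetric])
  ultimately show ?thesis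
    using edge_eig_proportional[OF f edge_eig_fund_cos_reflected, of l 0 x] x by auto
qed

definition profile :: "(nat \<Rightarrow> real) \<Rightarrow> real \<Rightarrow> nat \<Rightarrow> real \<Rightarrow> real" where
  "profile l m j x =
     (if j = 0 then fund_cos m (l 0 - x) / fund_cos m (l 0) else fund_sin m x / fund_sin m (l j))"

definition profile' :: "(nat \<Rightarrow> real) \<Rightarrow> real \<Rightarrow> nat \<Rightarrow> real \<Rightarrow> real" where
  "profile' l m j x =
     (if j = 0 then - fund_cos' m (l 0 - x) / fund_cos m (l 0)
      else fund_sin' m x / fund_sin m (l j))"

lemma edge_eig_profile: "edge_eig (l j) m (profile l m j) (profile' l m j)"
proof (cases "j = 0")
  case True
  then show ?thesis
    using edge_eig_scale[OF edge_eig_fund_cos_reflected, of "l 0" m "1 / fund_cos m (l 0)"]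
    by (simp add: profile_def[abs_def] profile'_def[abs_def])
next
  case False
  then show ?thesis
    using edge_eig_scale[OF edge_eig_fund_sin, of "l j" m "1 / fund_sin m (l j)"]
    by (simp add: profile_def[abs_def] profile'_def[abs_def])
qed

(* Minus the sum of the outgoing derivatives at A of the profile; the profile is an eigenfunction
   iff secular i l m = - coupling i gA. *)
definition secular :: "nat \<Rightarrow> (nat \<Rightarrow> real) \<Rightarrow> real \<Rightarrow> real" where
  "secular i l m = (\<Sum>j\<in>{1..4}. fund_sin' m (l j) / fund_sin m (l j))
     + (if i = 2 then fund_cos' m (l 0) / fund_cos m (l 0) else 0)"

lemma secular_zero: "secular i l 0 = (\<Sum>j\<in>{1..4}. 1 / l j)"
  by (simp add: secular_def fund_sin_def fund_sin'_def fund_cos_def fund_cos'_def)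

lemma secular_positive_branch:
  assumes "0 < k"
  shows "secular i l (k\<^sup>2) = (\<Sum>j\<in>{1..4}. k * cos (k * l j) / sin (k * l j))
     - (if i = 2 then k * sin (k * l 0) / cos (k * l 0) else 0)"
  using assms by (simp add: secular_def fund_sin_def fund_sin'_def fund_cos_def fund_cos'_def)

lemma secular_negative_branch:
  assumes "0 < k"
  shows "secular i l (- k\<^sup>2) = (\<Sum>j\<in>{1..4}. k * cosh (k * l j) / sinh (k * l j))
     + (if i = 2 then k * sinh (k * l 0) / cosh (k * l 0) else 0)"
  using assms by (simp add: secular_def fund_sin_def fund_sin'_def fund_cos_def fund_cos'_def)

lemma mult_cos_le_sin:
  assumes "0 \<le> x" "x \<le> pi"
  shows "x * cos x \<le> sin x"
proof -
  have "(\<lambda>x. sin x - x * cos x) 0 \<le> (\<lambda>x. sin x - x * cos x) x"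
  proof (rule DERIV_nonneg_imp_nondecreasing[OF assms(1)])
    fix y assume "0 \<le> y" "y \<le> x"
    then have "0 \<le> y * sin y" using assms sin_ge_zero[of y] by simp
    moreover have "((\<lambda>x. sin x - x * cos x) has_real_derivative y * sin y) (at y)"
      by (auto intro!: derivative_eq_intros)
    ultimately show "\<exists>d. ((\<lambda>x. sin x - x * cos x) has_real_derivative d) (at y) \<and> 0 \<le> d"
      by blast
  qed
  then show ?thesis by simp
qed

lemma mult_cot_le_inverse:
  assumes "0 < k" "0 < l" "k * l < pi"
  shows "k * cos (k * l) / sin (k * l) \<le> 1 / l"
proof -
  have "0 < sin (k * l)" using assms by (intro sin_gt_zero) auto
  moreover have "(k * l) * cos (k * l) \<le> sin (k * l)" using assms by (intro mult_cos_le_sin) auto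
  ultimately show ?thesis using assms by (simp add: field_simps)
qed

lemma continuous_on_interval_eventually_attains:
  fixes f :: "real \<Rightarrow> real"
  assumes "continuous_on S f" "is_interval S"
    and "F \<noteq> bot" "eventually (\<lambda>x. x \<in> S \<and> f x \<le> T) F"
    and "G \<noteq> bot" "eventually (\<lambda>x. x \<in> S \<and> T \<le> f x) G"
  shows "\<exists>x\<in>S. f x = T"
proof -
  obtain x y where "x \<in> S" "f x \<le> T" "y \<in> S" "T \<le> f y"
    using eventually_happens'[OF assms(3,4)] eventually_happens'[OF assms(5,6)] by blast
  moreover have "is_interval (f ` S)"
    using connected_continuous_image[OF assms(1)] assms(2) by (simp add: is_interval_connected_1)
  ultimately have "T \<in> f ` S" unfolding is_interval_1 by blast
  then show ?thesis by blast
qed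

(* Since sqrt is odd on the reals, the condition sqrt m < crit_freq i l includes every m \<le> 0. *)
definition crit_freq :: "nat \<Rightarrow> (nat \<Rightarrow> real) \<Rightarrow> real" where
  "crit_freq i l = Min ((\<lambda>j. pi / l j) ` {1..4} \<union> (if i = 2 then {pi / (2 * l 0)} else {}))"

locale Gamma_B =
  fixes i :: nat and l :: "nat \<Rightarrow> real" and gA :: real
  assumes graph_index: "i \<in> {1, 2}" and edge_length_pos: "\<forall>j\<in>edges i. 0 < l j"
begin

lemma length_pos: "j \<in> {1..4} \<Longrightarrow> 0 < l j" "i = 2 \<Longrightarrow> 0 < l 0"
  using edge_length_pos graph_index by (auto simp: edges_def)

lemma edges_cases: "j \<in> edges i \<Longrightarrow> j \<in> {1..4} \<or> j = 0 \<and> i = 2"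
  using graph_index by (auto simp: edges_def split: if_splits)

lemma sum_edges: "(\<Sum>j\<in>edges i. F j) = (if i = 2 then F 0 else 0) + (\<Sum>j\<in>{1..4}. F j)"
proof -
  have "{0..4::nat} = insert 0 {1..4}" by auto
  then show ?thesis using graph_index by (auto simp: edges_def)
qed

lemma crit_freq_pos: "0 < crit_freq i l"
  unfolding crit_freq_def using length_pos by (subst Min_gr_iff) auto

lemma crit_freq_le:
  "j \<in> {1..4} \<Longrightarrow> crit_freq i l * l j \<le> pi"
  "i = 2 \<Longrightarrow> crit_freq i l * l 0 \<le> pi / 2"
proof -
  assume "j \<in> {1..4}"
  then have "crit_freq i l \<le> pi / l j" unfolding crit_freq_def by (intro Min_le) auto
  then show "crit_freq i l * l j \<le> pi" using length_pos \<open>j \<in> {1..4}\<close> by (simp add: field_simps)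
next
  assume "i = 2"
  then have "crit_freq i l \<le> pi / (2 * l 0)" unfolding crit_freq_def by (intro Min_le) auto
  then show "crit_freq i l * l 0 \<le> pi / 2" using length_pos \<open>i = 2\<close> by (simp add: field_simps)
qed

lemma crit_freq_cases:
  obtains j where "j \<in> {1..4}" "crit_freq i l = pi / l j"
  | "i = 2" "crit_freq i l = pi / (2 * l 0)"
proof -
  have "crit_freq i l \<in> (\<lambda>j. pi / l j) ` {1..4} \<union> (if i = 2 then {pi / (2 * l 0)} else {})"
    unfolding crit_freq_def by (intro Min_in) auto
  then show ?thesis using that by (auto split: if_splits)
qed

lemma mult_less_of_below_crit_freq:
  assumes "sqrt m < crit_freq i l" "0 \<le> x" "x \<le> L" "0 < L" "crit_freq i l * L \<le> b" "0 < b"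
  shows "sqrt m * x < b"
proof (cases "sqrt m \<le> 0")
  case True
  then show ?thesis using mult_nonpos_nonneg[OF True assms(2)] assms(6) by linarith
next
  case False
  then have "sqrt m * x \<le> sqrt m * L" using assms(3) by (simp add: mult_left_mono)
  also have "\<dots> < crit_freq i l * L" using assms(1,4) by simp
  finally show ?thesis using assms(5) by simp
qed

lemma fund_sin_pos_on_edge:
  assumes "sqrt m < crit_freq i l" "j \<in> {1..4}" "0 < x" "x \<le> l j"
  shows "0 < fund_sin m x"
  using assms length_pos(1) crit_freq_le(1)
  by (intro fund_sin_pos mult_less_of_below_crit_freq[where L = "l j"]) auto

lemma fund_cos_pos_on_edge:
  assumes "sqrt m < crit_freq i l" "i = 2" "0 \<le> x" "x \<le> l 0"
  shows "0 < fund_cos m x"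
  using assms length_pos(2) crit_freq_le(2)
  by (intro fund_cos_pos mult_less_of_below_crit_freq[where L = "l 0"]) auto

lemma secular_negative_branch_tendsto_zero:
  "((\<lambda>k. secular i l (- k\<^sup>2)) \<longlongrightarrow> secular i l 0) (at_right 0)"
proof -
  have "((\<lambda>k. k * cosh (k * l j) / sinh (k * l j)) \<longlongrightarrow> 1 / l j) (at_right 0)" if "j \<in> {1..4}" for j
    using length_pos(1)[OF that] by real_asymp (simp add: field_simps)
  moreover have "((\<lambda>k. if i = 2 then k * sinh (k * l 0) / cosh (k * l 0) else 0) \<longlongrightarrow> 0) (at_right 0)"
    by (cases "i = 2") (simp_all, real_asymp)
  ultimately have "((\<lambda>k. (\<Sum>j\<in>{1..4}. k * cosh (k * l j) / sinh (k * l j))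
      + (if i = 2 then k * sinh (k * l 0) / cosh (k * l 0) else 0)) \<longlongrightarrow> secular i l 0) (at_right 0)"
    unfolding secular_zero by (intro tendsto_add[where b = 0, simplified] tendsto_sum) auto
  then show ?thesis
    by (rule Lim_transform_eventually)
       (auto intro: eventually_mono[OF eventually_at_right_less] simp: secular_negative_branch)
qed

lemma secular_positive_branch_tendsto_zero:
  "((\<lambda>k. secular i l (k\<^sup>2)) \<longlongrightarrow> secular i l 0) (at_right 0)"
proof -
  have "((\<lambda>k. k * cos (k * l j) / sin (k * l j)) \<longlongrightarrow> 1 / l j) (at_right 0)" if "j \<in> {1..4}" for j
    using length_pos(1)[OF that] by real_asymp (simp add: field_simps)
  moreover have "((\<lambda>k. if i = 2 then k * sin (k * l 0) / cos (k * l 0) else 0) \<longlongrightarrow> 0) (at_right 0)"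
    by (cases "i = 2") (simp_all, real_asymp)
  ultimately have "((\<lambda>k. (\<Sum>j\<in>{1..4}. k * cos (k * l j) / sin (k * l j))
      - (if i = 2 then k * sin (k * l 0) / cos (k * l 0) else 0)) \<longlongrightarrow> secular i l 0) (at_right 0)"
    unfolding secular_zero by (intro tendsto_diff[where b = 0, simplified] tendsto_sum) auto
  then show ?thesis
    by (rule Lim_transform_eventually)
       (auto intro: eventually_mono[OF eventually_at_right_less] simp: secular_positive_branch)
qed

lemma secular_negative_branch_at_top: "filterlim (\<lambda>k. secular i l (- k\<^sup>2)) at_top at_top"
proof (rule filterlim_at_top_mono)
  have "0 < l 1" by (rule length_pos) simp
  then show "filterlim (\<lambda>k. k * cosh (k * l 1) / sinh (k * l 1)) at_top at_top"
    by real_asymp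
  have "k * cosh (k * l 1) / sinh (k * l 1) \<le> secular i l (- k\<^sup>2)" if "0 < k" for k
  proof -
    have nonneg: "0 \<le> k * cosh (k * l j) / sinh (k * l j)" if "j \<in> {1..4}" for j
      using \<open>0 < k\<close> length_pos(1)[OF that] by (simp add: less_imp_le)
    have "k * cosh (k * l 1) / sinh (k * l 1) \<le> (\<Sum>j\<in>{1..4}. k * cosh (k * l j) / sinh (k * l j))"
      using nonneg by (intro member_le_sum) auto
    moreover have "0 \<le> (if i = 2 then k * sinh (k * l 0) / cosh (k * l 0) else 0)"
      using \<open>0 < k\<close> length_pos(2) by (simp add: less_imp_le)
    ultimately show ?thesis using secular_negative_branch[OF \<open>0 < k\<close>, of i l] by linarith
  qed
  then show "\<forall>\<^sub>F k in at_top. k * cosh (k * l 1) / sinh (k * l 1) \<le> secular i l (- k\<^sup>2)"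
    by (intro eventually_mono[OF eventually_gt_at_top[of 0]])
qed

lemma positive_branch_term_bounds:
  assumes "0 < k" "k < crit_freq i l"
  shows "j \<in> {1..4} \<Longrightarrow> 0 < sin (k * l j)"
    and "j \<in> {1..4} \<Longrightarrow> k * cos (k * l j) / sin (k * l j) \<le> 1 / l j"
    and "i = 2 \<Longrightarrow> 0 < cos (k * l 0)"
    and "i = 2 \<Longrightarrow> 0 \<le> k * sin (k * l 0) / cos (k * l 0)"
proof -
  assume j: "j \<in> {1..4}"
  have "k * l j < pi"
    using mult_less_of_below_crit_freq[of "k\<^sup>2" "l j" "l j" pi] assms length_pos(1)[OF j]
      crit_freq_le(1)[OF j] by simp
  then show "0 < sin (k * l j)" "k * cos (k * l j) / sin (k * l j) \<le> 1 / l j"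
    using assms(1) length_pos(1)[OF j] by (auto intro: sin_gt_zero mult_cot_le_inverse)
next
  assume i: "i = 2"
  have "k * l 0 < pi / 2"
    using mult_less_of_below_crit_freq[of "k\<^sup>2" "l 0" "l 0" "pi / 2"] assms length_pos(2)[OF i]
      crit_freq_le(2)[OF i] by simp
  moreover have "0 < k * l 0" using assms(1) length_pos(2)[OF i] by simp
  ultimately have "0 < cos (k * l 0)" "0 < sin (k * l 0)"
    by (auto intro!: cos_gt_zero_pi sin_gt_zero)
  then show "0 < cos (k * l 0)" "0 \<le> k * sin (k * l 0) / cos (k * l 0)"
    using assms(1) by simp_all
qed

lemma secular_positive_branch_le:
  assumes "0 < k" "k < crit_freq i l"
  shows "j \<in> {1..4} \<Longrightarrow> secular i l (k\<^sup>2) \<le> secular i l 0 + k * cos (k * l j) / sin (k * l j)"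
    and "i = 2 \<Longrightarrow> secular i l (k\<^sup>2) \<le> secular i l 0 - k * sin (k * l 0) / cos (k * l 0)"
proof -
  let ?t = "\<lambda>j. k * cos (k * l j) / sin (k * l j)"
  have sum_le: "(\<Sum>j\<in>{1..4}. ?t j) \<le> secular i l 0"
    unfolding secular_zero using positive_branch_term_bounds(2)[OF assms] by (intro sum_mono) auto
  have tan_nonneg: "0 \<le> (if i = 2 then k * sin (k * l 0) / cos (k * l 0) else 0)"
    using positive_branch_term_bounds(4)[OF assms] by simp
  show "secular i l (k\<^sup>2) \<le> secular i l 0 + ?t j" if j: "j \<in> {1..4}"
  proof -
    have "(\<Sum>j\<in>{1..4}. ?t j) = ?t j + (\<Sum>j\<in>{1..4} - {j}. ?t j)"
      using j by (intro sum.remove) auto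
    also have "(\<Sum>j\<in>{1..4} - {j}. ?t j) \<le> (\<Sum>j\<in>{1..4} - {j}. 1 / l j)"
      using positive_branch_term_bounds(2)[OF assms] by (intro sum_mono) auto
    also have "\<dots> \<le> secular i l 0"
      unfolding secular_zero using length_pos(1) by (intro sum_mono2) (auto intro: less_imp_le)
    finally show ?thesis
      using secular_positive_branch[OF assms(1), of i l] tan_nonneg by linarith
  qed
  show "i = 2 \<Longrightarrow> secular i l (k\<^sup>2) \<le> secular i l 0 - k * sin (k * l 0) / cos (k * l 0)"
    using secular_positive_branch[OF assms(1), of i l] sum_le by simp
qed

lemma secular_positive_branch_at_crit_freq:
  "filterlim (\<lambda>k. secular i l (k\<^sup>2)) at_bot (at_left (crit_freq i l))"
proof -
  note below = eventually_at_left_real[OF crit_freq_pos]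
  show ?thesis
  proof (cases rule: crit_freq_cases)
    case (1 j)
    have "filterlim (\<lambda>k. k * cos (k * l j) / sin (k * l j)) at_bot (at_left (pi / l j))"
      using length_pos(1)[OF 1(1)] by real_asymp
    then have "filterlim (\<lambda>k. secular i l 0 + k * cos (k * l j) / sin (k * l j)) at_bot
        (at_left (pi / l j))"
      by (rule filterlim_tendsto_add_at_bot_iff[OF tendsto_const, THEN iffD2])
    then show ?thesis
      unfolding 1(2)[symmetric]
      by (rule filterlim_at_bot_mono)
         (use below secular_positive_branch_le(1) 1(1) in \<open>auto elim: eventually_mono\<close>)
  next
    case 2
    have "filterlim (\<lambda>k. - (k * sin (k * l 0) / cos (k * l 0))) at_bot (at_left (pi / (2 * l 0)))"
      using length_pos(2)[OF 2(1)] by real_asymp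
    then have "filterlim (\<lambda>k. secular i l 0 - k * sin (k * l 0) / cos (k * l 0)) at_bot
        (at_left (pi / (2 * l 0)))"
      unfolding diff_conv_add_uminus
      by (rule filterlim_tendsto_add_at_bot_iff[OF tendsto_const, THEN iffD2])
    then show ?thesis
      unfolding 2(2)[symmetric]
      by (rule filterlim_at_bot_mono)
         (use below secular_positive_branch_le(2) 2(1) in \<open>auto elim: eventually_mono\<close>)
  qed
qed

lemma continuous_on_secular_negative_branch:
  "continuous_on {0<..} (\<lambda>k. secular i l (- k\<^sup>2))"
proof -
  have "sinh (k * l j) \<noteq> 0" if "0 < k" "j \<in> {1..4}" for k j
    using that length_pos(1)[OF that(2)] by simp
  moreover have "cosh (k * l 0) \<noteq> 0" for k
    using cosh_real_pos[of "k * l 0"] by simp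
  ultimately have "continuous_on {0<..} (\<lambda>k. (\<Sum>j\<in>{1..4}. k * cosh (k * l j) / sinh (k * l j))
      + (if i = 2 then k * sinh (k * l 0) / cosh (k * l 0) else 0))"
    by (cases "i = 2") (auto intro!: continuous_intros)
  then show ?thesis
    by (rule continuous_on_cong[THEN iffD1, rotated 2]) (auto simp: secular_negative_branch)
qed

lemma continuous_on_secular_positive_branch:
  "continuous_on {0<..<crit_freq i l} (\<lambda>k. secular i l (k\<^sup>2))"
proof -
  have "continuous_on {0<..<crit_freq i l} (\<lambda>k. (\<Sum>j\<in>{1..4}. k * cos (k * l j) / sin (k * l j))
      - (if i = 2 then k * sin (k * l 0) / cos (k * l 0) else 0))"
    using positive_branch_term_bounds(1,3)
    by (cases "i = 2") (auto intro!: continuous_intros simp: less_imp_neq[symmetric])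
  then show ?thesis
    by (rule continuous_on_cong[THEN iffD1, rotated 2]) (auto simp: secular_positive_branch)
qed

lemma secular_attains: "\<exists>m. sqrt m < crit_freq i l \<and> secular i l m = T"
proof -
  consider "T = secular i l 0" | "secular i l 0 < T" | "T < secular i l 0" by linarith
  then show ?thesis
  proof cases
    case 1
    then show ?thesis using crit_freq_pos by (intro exI[of _ 0]) simp
  next
    case 2
    have "\<exists>k\<in>{0<..}. secular i l (- k\<^sup>2) = T"
    proof (rule continuous_on_interval_eventually_attains
        [OF continuous_on_secular_negative_branch _ _ _ trivial_limit_at_top_linorder])
      show "\<forall>\<^sub>F k in at_right 0. k \<in> {0<..} \<and> secular i l (- k\<^sup>2) \<le> T"
        using eventually_at_right_less
          order_tendstoD(2)[OF secular_negative_branch_tendsto_zero 2]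
        by eventually_elim auto
      show "\<forall>\<^sub>F k in at_top. k \<in> {0<..} \<and> T \<le> secular i l (- k\<^sup>2)"
        using eventually_gt_at_top[of 0]
          secular_negative_branch_at_top[unfolded filterlim_at_top, rule_format, of T]
        by eventually_elim auto
    qed (auto simp: is_interval_1)
    then obtain k where "0 < k" "secular i l (- k\<^sup>2) = T" by auto
    then show ?thesis using crit_freq_pos by (intro exI[of _ "- k\<^sup>2"]) (simp add: real_sqrt_minus)
  next
    case 3
    have "\<exists>k\<in>{0<..<crit_freq i l}. secular i l (k\<^sup>2) = T"
    proof (rule continuous_on_interval_eventually_attains[OF continuous_on_secular_positive_branch
          _ trivial_limit_at_left_real _ trivial_limit_at_right_real])
      show "\<forall>\<^sub>F k in at_left (crit_freq i l).
          k \<in> {0<..<crit_freq i l} \<and> secular i l (k\<^sup>2) \<le> T"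
        using eventually_at_left_real[OF crit_freq_pos]
          secular_positive_branch_at_crit_freq[unfolded filterlim_at_bot, rule_format, of T]
        by eventually_elim auto
      show "\<forall>\<^sub>F k in at_right 0. k \<in> {0<..<crit_freq i l} \<and> T \<le> secular i l (k\<^sup>2)"
        using eventually_at_right_real[OF crit_freq_pos]
          order_tendstoD(1)[OF secular_positive_branch_tendsto_zero 3]
        by eventually_elim auto
    qed (auto simp: is_interval_1)
    then obtain k where "0 < k" "k < crit_freq i l" "secular i l (k\<^sup>2) = T" by auto
    then show ?thesis by (intro exI[of _ "k\<^sup>2"]) simp
  qed
qed

lemma profile_pos:
  assumes "sqrt m < crit_freq i l" "j \<in> edges i" "x \<in> {0..l j}" "j = 0 \<or> x \<noteq> 0"
  shows "0 < profile l m j x"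
  using edges_cases[OF assms(2)]
proof
  assume j: "j \<in> {1..4}"
  then show ?thesis
    using assms fund_sin_pos_on_edge[OF assms(1) j] length_pos(1)[OF j] by (simp add: profile_def)
next
  assume j: "j = 0 \<and> i = 2"
  then show ?thesis
    using assms fund_cos_pos_on_edge[OF assms(1)] length_pos(2) by (simp add: profile_def)
qed

lemma profile_is_eigfun:
  assumes regime: "sqrt m < crit_freq i l" and root: "secular i l m = - coupling i gA"
  shows "is_eigfun_B i l gA m (profile l m)"
proof -
  have sin_pos: "0 < fund_sin m (l j)" if "j \<in> {1..4}" for j
    using fund_sin_pos_on_edge[OF regime that] length_pos(1)[OF that] by simp
  have cos_pos: "0 < fund_cos m (l 0)" if "i = 2"
    using fund_cos_pos_on_edge[OF regime that] length_pos(2)[OF that] by simp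
  have at_A: "profile l m j (l j) = 1" if "j \<in> {1..4}" for j
    using sin_pos[OF that] that by (simp add: profile_def)
  have kirchhoff: "(if i = 2 then profile' l m 0 0 else 0) + (\<Sum>j\<in>{1..4}. - profile' l m j (l j))
      = coupling i gA * profile l m 1 (l 1)"
    using root at_A[of 1] by (cases "i = 2") (simp_all add: secular_def profile'_def sum_negf)
  have nontrivial: "\<exists>j\<in>edges i. \<exists>x\<in>{0..l j}. profile l m j x \<noteq> 0"
    using at_A[of 1] length_pos(1)[of 1] graph_index
    by (intro bexI[of _ 1] bexI[of _ "l 1"]) (auto simp: edges_def)
  have "i = 2 \<longrightarrow> profile l m 0 0 = profile l m 1 (l 1)"
    using cos_pos at_A[of 1] by (auto simp: profile_def)
  moreover have "i = 2 \<longrightarrow> profile' l m 0 (l 0) = 0"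
    by (simp add: profile'_def)
  moreover have "\<forall>j\<in>{1..4}. profile l m j 0 = 0"
    by (simp add: profile_def)
  ultimately show ?thesis
    unfolding is_eigfun_B_def using edge_eig_profile at_A kirchhoff nontrivial
    by (intro exI[of _ "profile' l m"]) simp
qed

lemma eigfun_eq_profile:
  assumes regime: "sqrt m < crit_freq i l" and "is_eigfun_B i l gA m \<phi>"
    and j: "j \<in> edges i" and x: "x \<in> {0..l j}"
  shows "\<phi> j x = \<phi> 1 (l 1) * profile l m j x"
proof -
  obtain \<phi>' where eig: "\<forall>j\<in>edges i. edge_eig (l j) m (\<phi> j) (\<phi>' j)"
    and dirichlet: "\<forall>j\<in>{1..4}. \<phi> j 0 = 0"
    and continuous: "\<forall>j\<in>{1..4}. \<phi> j (l j) = \<phi> 1 (l 1)" "i = 2 \<longrightarrow> \<phi> 0 0 = \<phi> 1 (l 1)"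
    and neumann: "i = 2 \<longrightarrow> \<phi>' 0 (l 0) = 0"
    using assms(2) unfolding is_eigfun_B_def by blast
  from edges_cases[OF j] show ?thesis
  proof
    assume j14: "j \<in> {1..4}"
    have "\<phi> j x * fund_sin m (l j) = \<phi> j (l j) * fund_sin m x"
      using eig j j14 dirichlet x fund_sin_pos_on_edge[OF regime j14]
      by (intro dirichlet_edge_eq[where f' = "\<phi>' j"]) auto
    moreover have "fund_sin m (l j) \<noteq> 0"
      using fund_sin_pos_on_edge[OF regime j14 length_pos(1)[OF j14] order.refl] by simp
    ultimately have "\<phi> j x = \<phi> j (l j) * (fund_sin m x / fund_sin m (l j))"
      by (simp add: field_simps)
    then show ?thesis
      unfolding continuous(1)[rule_format, OF j14] using j14 by (simp add: profile_def)
  next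
    assume j0: "j = 0 \<and> i = 2"
    have "\<phi> 0 x * fund_cos m (l 0) = \<phi> 0 0 * fund_cos m (l 0 - x)"
      using eig j j0 neumann x fund_cos_pos_on_edge[OF regime]
      by (intro neumann_edge_eq[where f' = "\<phi>' 0"]) auto
    moreover have "fund_cos m (l 0) \<noteq> 0"
      using fund_cos_pos_on_edge[OF regime _ _ order.refl] length_pos(2) j0 by simp
    ultimately have "\<phi> 0 x = \<phi> 0 0 * (fund_cos m (l 0 - x) / fund_cos m (l 0))"
      by (simp add: field_simps)
    then show ?thesis
      using continuous(2) j0 by (simp add: profile_def)
  qed
qed

lemma eigfun_at_A_nonzero:
  assumes "sqrt m < crit_freq i l" "is_eigfun_B i l gA m \<phi>"
  shows "\<phi> 1 (l 1) \<noteq> 0"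
proof -
  obtain j x where "j \<in> edges i" "x \<in> {0..l j}" "\<phi> j x \<noteq> 0"
    using assms(2) unfolding is_eigfun_B_def by blast
  then show ?thesis using eigfun_eq_profile[OF assms] by fastforce
qed

lemma green_identity:
  assumes "is_eigfun_B i l gA mu \<phi>" "is_eigfun_B i l gA lam \<psi>"
  obtains \<phi>' \<psi>' where "\<forall>j\<in>edges i. edge_eig (l j) mu (\<phi> j) (\<phi>' j)"
    "\<forall>j\<in>edges i. edge_eig (l j) lam (\<psi> j) (\<psi>' j)"
    "(\<Sum>j\<in>edges i. wronskian (\<phi> j) (\<phi>' j) (\<psi> j) (\<psi>' j) (l j)
       - wronskian (\<phi> j) (\<phi>' j) (\<psi> j) (\<psi>' j) 0) = 0"
proof -
  obtain \<phi>' where \<phi>: "\<forall>j\<in>edges i. edge_eig (l j) mu (\<phi> j) (\<phi>' j)"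
    "\<forall>j\<in>{1..4}. \<phi> j 0 = 0" "\<forall>j\<in>{1..4}. \<phi> j (l j) = \<phi> 1 (l 1)" "i = 2 \<longrightarrow> \<phi> 0 0 = \<phi> 1 (l 1)"
    "(if i = 2 then \<phi>' 0 0 else 0) + (\<Sum>j\<in>{1..4}. - \<phi>' j (l j)) = coupling i gA * \<phi> 1 (l 1)"
    "i = 2 \<longrightarrow> \<phi>' 0 (l 0) = 0"
    using assms(1) unfolding is_eigfun_B_def by blast
  obtain \<psi>' where \<psi>: "\<forall>j\<in>edges i. edge_eig (l j) lam (\<psi> j) (\<psi>' j)"
    "\<forall>j\<in>{1..4}. \<psi> j 0 = 0" "\<forall>j\<in>{1..4}. \<psi> j (l j) = \<psi> 1 (l 1)" "i = 2 \<longrightarrow> \<psi> 0 0 = \<psi> 1 (l 1)"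
    "(if i = 2 then \<psi>' 0 0 else 0) + (\<Sum>j\<in>{1..4}. - \<psi>' j (l j)) = coupling i gA * \<psi> 1 (l 1)"
    "i = 2 \<longrightarrow> \<psi>' 0 (l 0) = 0"
    using assms(2) unfolding is_eigfun_B_def by blast
  define W where "W j = wronskian (\<phi> j) (\<phi>' j) (\<psi> j) (\<psi>' j)" for j
  define a b where "a = \<phi> 1 (l 1)" and "b = \<psi> 1 (l 1)"
  have "W j (l j) - W j 0 = b * \<phi>' j (l j) - a * \<psi>' j (l j)" if "j \<in> {1..4}" for j
    using \<phi>(2) \<psi>(2) that
    unfolding W_def wronskian_def a_def b_def
      \<phi>(3)[rule_format, OF that] \<psi>(3)[rule_format, OF that]
    by simp
  then have "(\<Sum>j\<in>{1..4}. W j (l j) - W j 0) = (\<Sum>j\<in>{1..4}. b * \<phi>' j (l j) - a * \<psi>' j (l j))"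
    by (rule sum.cong[OF refl])
  moreover have "i = 2 \<Longrightarrow> W 0 (l 0) - W 0 0 = a * \<psi>' 0 0 - b * \<phi>' 0 0"
    using \<phi>(4,6) \<psi>(4,6) by (simp add: W_def wronskian_def a_def b_def)
  ultimately have "(\<Sum>j\<in>edges i. W j (l j) - W j 0)
      = a * ((if i = 2 then \<psi>' 0 0 else 0) + (\<Sum>j\<in>{1..4}. - \<psi>' j (l j)))
        - b * ((if i = 2 then \<phi>' 0 0 else 0) + (\<Sum>j\<in>{1..4}. - \<phi>' j (l j)))"
    unfolding sum_edges
    by (cases "i = 2") (simp_all add: sum_subtractf sum_negf sum_distrib_left algebra_simps)
  also have "\<dots> = 0"
    using \<phi>(5) \<psi>(5) by (simp add: a_def b_def)
  finally show ?thesis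
    using that \<phi>(1) \<psi>(1) unfolding W_def by blast
qed

lemma eigval_eq_of_product_pos:
  assumes "is_eigfun_B i l gA mu \<phi>" "is_eigfun_B i l gA lam \<psi>"
    and pos: "\<forall>j\<in>edges i. \<forall>x\<in>{0<..<l j}. 0 < c * (\<phi> j x * \<psi> j x)"
  shows "lam = mu"
proof (rule ccontr)
  assume "lam \<noteq> mu"
  obtain \<phi>' \<psi>' where \<phi>: "\<forall>j\<in>edges i. edge_eig (l j) mu (\<phi> j) (\<phi>' j)"
    and \<psi>: "\<forall>j\<in>edges i. edge_eig (l j) lam (\<psi> j) (\<psi>' j)"
    and green: "(\<Sum>j\<in>edges i. wronskian (\<phi> j) (\<phi>' j) (\<psi> j) (\<psi>' j) (l j)
       - wronskian (\<phi> j) (\<phi>' j) (\<psi> j) (\<psi>' j) 0) = 0"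
    by (rule green_identity[OF assms(1,2)])
  define dW where "dW j = wronskian (\<phi> j) (\<phi>' j) (\<psi> j) (\<psi>' j) (l j)
      - wronskian (\<phi> j) (\<phi>' j) (\<psi> j) (\<psi>' j) 0" for j
  have "0 < c * (lam - mu) * dW j" if "j \<in> edges i" for j
    unfolding dW_def
    using \<phi> \<psi> edge_length_pos pos that \<open>lam \<noteq> mu\<close> by (intro wronskian_increment_sign) auto
  then have "0 < (\<Sum>j\<in>edges i. c * (lam - mu) * dW j)"
    using graph_index by (intro sum_pos) (auto simp: edges_def)
  then show False
    using green by (simp add: dW_def sum_distrib_left[symmetric])
qed

lemma eigval_below_crit_freq_le:
  assumes regime: "sqrt m < crit_freq i l"
    and "is_eigval_B i l gA m" "is_eigval_B i l gA mu"
  shows "m \<le> mu"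
proof (cases "sqrt mu < crit_freq i l")
  case True
  obtain \<phi> \<psi> where \<phi>: "is_eigfun_B i l gA m \<phi>" and \<psi>: "is_eigfun_B i l gA mu \<psi>"
    using assms(2,3) unfolding is_eigval_B_def by blast
  define a b where "a = \<phi> 1 (l 1)" and "b = \<psi> 1 (l 1)"
  have "0 < (a * b) * (\<phi> j x * \<psi> j x)" if "j \<in> edges i" "x \<in> {0<..<l j}" for j x
  proof -
    have "(a * b) * (\<phi> j x * \<psi> j x) = (a * b)\<^sup>2 * (profile l m j x * profile l mu j x)"
      using eigfun_eq_profile[OF regime \<phi> that(1)] eigfun_eq_profile[OF True \<psi> that(1)] that(2)
      by (simp add: a_def b_def power2_eq_square)
    moreover have "a * b \<noteq> 0"
      using eigfun_at_A_nonzero[OF regime \<phi>] eigfun_at_A_nonzero[OF True \<psi>]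
      by (simp add: a_def b_def)
    ultimately show ?thesis
      using profile_pos[OF regime that(1)] profile_pos[OF True that(1)] that(2) by simp
  qed
  then have "mu = m" by (intro eigval_eq_of_product_pos[OF \<phi> \<psi>]) blast
  then show ?thesis by simp
next
  case False
  then have "sqrt m < sqrt mu" using regime by linarith
  then show ?thesis by simp
qed

lemma eigfun_proportional:
  assumes "sqrt m < crit_freq i l" "is_eigfun_B i l gA m \<phi>" "is_eigfun_B i l gA m \<psi>"
  shows "\<exists>c. \<forall>j\<in>edges i. \<forall>x\<in>{0..l j}. \<psi> j x = c * \<phi> j x"
  using eigfun_eq_profile[OF assms(1,2)] eigfun_eq_profile[OF assms(1,3)]
    eigfun_at_A_nonzero[OF assms(1,2)]
  by (intro exI[of _ "\<psi> 1 (l 1) / \<phi> 1 (l 1)"]) simp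

lemma eigfun_nonzero:
  assumes "sqrt m < crit_freq i l" "is_eigfun_B i l gA m \<phi>"
    and "j \<in> edges i" "x \<in> {0..l j}" "j = 0 \<or> x \<noteq> 0"
  shows "\<phi> j x \<noteq> 0"
  using eigfun_eq_profile[OF assms(1-4)] eigfun_at_A_nonzero[OF assms(1,2)]
    profile_pos[OF assms(1,3-5)] by simp

lemma eigfun_symmetric:
  assumes "sqrt m < crit_freq i l" "is_eigfun_B i l gA m \<phi>"
    and "l j = l 1" "j \<in> {1..4}" "x \<in> {0..l 1}"
  shows "\<phi> j x = \<phi> 1 x"
  using eigfun_eq_profile[OF assms(1,2), of j x] eigfun_eq_profile[OF assms(1,2), of 1 x]
    assms(3-5) graph_index by (simp add: edges_def profile_def)

end

theorem lemma4p3: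
  fixes i :: nat and l :: "nat \<Rightarrow> real" and gA :: real
  assumes "i \<in> {1, 2}"
    and "\<forall>j\<in>edges i. l j > 0"
  shows "\<exists>lam1.
     is_eigval_B i l gA lam1 \<and>
     (\<forall>mu. is_eigval_B i l gA mu \<longrightarrow> lam1 \<le> mu) \<and>
     (\<forall>phi psi. is_eigfun_B i l gA lam1 phi \<and> is_eigfun_B i l gA lam1 psi \<longrightarrow>
        (\<exists>c. \<forall>j\<in>edges i. \<forall>x\<in>{0..l j}. psi j x = c * phi j x)) \<and>
     ((l 1 = l 2 \<and> l 2 = l 3 \<and> l 3 = l 4) \<longrightarrow>
        (\<forall>phi. is_eigfun_B i l gA lam1 phi \<longrightarrow>
           (\<forall>j\<in>{1..4}. \<forall>x\<in>{0..l 1}. phi j x = phi 1 x) \<and>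
           (\<forall>j\<in>edges i. \<forall>x\<in>{0..l j}. (j \<noteq> 0 \<and> x = 0) \<or> phi j x \<noteq> 0)))"
proof -
  interpret Gamma_B i l gA using assms by unfold_locales
  obtain m where regime: "sqrt m < crit_freq i l" and root: "secular i l m = - coupling i gA"
    using secular_attains by blast
  have eigval: "is_eigval_B i l gA m"
    unfolding is_eigval_B_def using profile_is_eigfun[OF regime root] by blast
  have equal_lengths: "l j = l 1" if "l 1 = l 2 \<and> l 2 = l 3 \<and> l 3 = l 4" "j \<in> {1..4}" for j
    using that by (auto simp: numeral_eq_Suc le_Suc_eq)
  show ?thesis
  proof (rule exI[of _ m], intro conjI allI impI ballI)
    show "is_eigval_B i l gA m" by (fact eigval)
    show "(j \<noteq> 0 \<and> x = 0) \<or> \<phi> j x \<noteq> 0"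
      if "is_eigfun_B i l gA m \<phi>" "j \<in> edges i" "x \<in> {0..l j}" for \<phi> j x
      using eigfun_nonzero[OF regime that] by (cases "j = 0") auto
  qed (use eigval_below_crit_freq_le[OF regime eigval] eigfun_proportional[OF regime]
      eigfun_symmetric[OF regime _ equal_lengths] in blast)+
qed

end
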